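(* Let $n\ge 1$ and let $P$ be the $n\times n$ permutation matrix of a permutation $\sigma\in S_n$. Then $P$ is the leaf matrix of at least one CNM of size $n$ if and only if $\sigma$ is irreducible.
   Context: A complete non-ambiguous matrix (CNM) of size $n$ is an $n\times n$ matrix $M=(m_{i,j})$ with entries in $\{0,1\}$ whose support $T=\{(i,j): m_{i,j}=1\}$ (whose elements are called vertices) satisfies: (1) $(1,1)\in T$; (2) for every $p=(i,j)\in T$ with $p\neq(1,1)$, exactly one of the following holds: there is $(i',j)\in T$ with $i'<i$, or there is $(i,j')\in T$ with $j'<j$; (3) every row and every column of $M$ contains at least one vertex; (4) define the parent of $p=(i,j)\neq(1,1)$ to be $(i',j)$ with $i'<i$ maximal if such a vertex exists, and otherwise $(i,j')$ with $j'<j$ maximal; then every vertex is the parent of either zero or exactly two vertices. A vertex with no children is a leaf. The leaf matrix $p(M)$ is obtained from $M$ by replacing all non-leaf vertices by $0$ (it is a permutation matrix). A permutation $\sigma\in S_n$ is irreducible if there is no $j$ with $1\le j<n$ such that $\sigma(\{1,\dots,j\})=\{1,\dots,j\}$; the permutation matrix of $\sigma$ has its $1$'s at positions $(i,\sigma(i))$. *)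

theory Defs
  imports "HOL-Combinatorics.Permutations"
begin

text \<open>Matrices of size n are functions nat => nat => nat, indices in {1..n};
  entries outside {1..n} x {1..n} are required to be 0.\<close>

definition support :: "(nat \<Rightarrow> nat \<Rightarrow> nat) \<Rightarrow> (nat \<times> nat) set" where
  "support M = {(i, j). M i j = 1}"

definition cnm_parent :: "(nat \<times> nat) set \<Rightarrow> nat \<times> nat \<Rightarrow> nat \<times> nat" where
  "cnm_parent T p = (case p of (i, j) \<Rightarrow>
     if \<exists>i'<i. (i', j) \<in> T then (Max {i'. i' < i \<and> (i', j) \<in> T}, j)
     else (i, Max {j'. j' < j \<and> (i, j') \<in> T}))"

definition cnm_children :: "(nat \<times> nat) set \<Rightarrow> nat \<times> nat \<Rightarrow> (nat \<times> nat) set" where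
  "cnm_children T p = {q \<in> T. q \<noteq> (1, 1) \<and> cnm_parent T q = p}"

definition is_cnm :: "nat \<Rightarrow> (nat \<Rightarrow> nat \<Rightarrow> nat) \<Rightarrow> bool" where
  "is_cnm n M \<longleftrightarrow>
     (\<forall>i j. M i j \<in> {0, 1}) \<and>
     (\<forall>i j. M i j \<noteq> 0 \<longrightarrow> i \<in> {1..n} \<and> j \<in> {1..n}) \<and>
     (1, 1) \<in> support M \<and>
     (\<forall>(i, j) \<in> support M. (i, j) \<noteq> (1, 1) \<longrightarrow>
        ((\<exists>i'<i. (i', j) \<in> support M) \<noteq> (\<exists>j'<j. (i, j') \<in> support M))) \<and>
     (\<forall>i\<in>{1..n}. \<exists>j. (i, j) \<in> support M) \<and>
     (\<forall>j\<in>{1..n}. \<exists>i. (i, j) \<in> support M) \<and>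
     (\<forall>p \<in> support M. card (cnm_children (support M) p) \<in> {0, 2})"

definition leaf_matrix :: "(nat \<Rightarrow> nat \<Rightarrow> nat) \<Rightarrow> (nat \<Rightarrow> nat \<Rightarrow> nat)" where
  "leaf_matrix M = (\<lambda>i j. if (i, j) \<in> support M \<and> cnm_children (support M) (i, j) = {}
                          then 1 else 0)"

definition perm_matrix :: "nat \<Rightarrow> (nat \<Rightarrow> nat) \<Rightarrow> (nat \<Rightarrow> nat \<Rightarrow> nat)" where
  "perm_matrix n \<sigma> = (\<lambda>i j. if i \<in> {1..n} \<and> j = \<sigma> i then 1 else 0)"

definition irreducible_perm :: "nat \<Rightarrow> (nat \<Rightarrow> nat) \<Rightarrow> bool" where
  "irreducible_perm n \<sigma> \<longleftrightarrow> \<not> (\<exists>j. 1 \<le> j \<and> j < n \<and> \<sigma> ` {1..j} = {1..j})"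

end

theory Submission
  imports Defs
begin

text \<open>
  In a CNM the children of a vertex are the nearest vertex below it and the nearest vertex to its
  right. So condition (4) says that a vertex has a vertex below it iff it has one to its right,
  and the leaves are the vertices ending both their row and their column. If the leaves form the
  permutation matrix of \<sigma>, the last vertex of row i is therefore (i, \<sigma> i) and the last
  vertex of column c is (inv \<sigma> c, c); conversely these bounds, together with conditions (1)-(3),
  already force a CNM with leaf matrix \<sigma>.

  If \<sigma> maps {1..j} onto itself with j < n, the leftmost vertex of row j+1 has its parent above
  it, so it lies in a column c \<le> j; but then the leaf of column c lies in a row \<le> j, above the
  vertex. Conversely, for irreducible \<sigma> a support satisfying the bounds is built row by row.
\<close>

lemma card_successor_set:
  fixes S :: "'a::linorder set"
  assumes "finite S"
  shows "card {a \<in> S. i < a \<and> (\<forall>x\<in>S. x < a \<longrightarrow> x \<le> i)} = of_bool (\<exists>a\<in>S. i < a)"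
proof (cases "\<exists>a\<in>S. i < a")
  case True
  define m where "m = Min {a \<in> S. i < a}"
  have fin: "finite {a \<in> S. i < a}"
    using assms by simp
  have "m \<in> S" "i < m"
    using Min_in[OF fin] True unfolding m_def by auto
  moreover have "\<And>a. a \<in> S \<Longrightarrow> i < a \<Longrightarrow> m \<le> a"
    using Min_le[OF fin] unfolding m_def by simp
  ultimately have "a \<in> S \<and> i < a \<and> (\<forall>x\<in>S. x < a \<longrightarrow> x \<le> i) \<longleftrightarrow> a = m" for a
    by (meson antisym_conv2 leD not_le)
  then have "{a \<in> S. i < a \<and> (\<forall>x\<in>S. x < a \<longrightarrow> x \<le> i)} = {m}"
    by blast
  then show ?thesis
    using True by simp
next
  case False
  then have "{a \<in> S. i < a \<and> (\<forall>x\<in>S. x < a \<longrightarrow> x \<le> i)} = {}"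
    by auto
  then show ?thesis
    using False by (simp only: card.empty of_bool_eq(1))
qed

lemma permutes_notin_image_prefix:
  fixes \<sigma> :: "nat \<Rightarrow> nat"
  assumes "\<sigma> permutes {1..n}" and "i \<in> {1..n}"
  shows "\<sigma> i \<notin> \<sigma> ` {1..<i}"
proof -
  have "{1..<i} \<subseteq> {1..n}"
    using assms(2) by auto
  then show ?thesis
    using inj_on_image_mem_iff[OF permutes_inj_on[OF assms(1)] assms(2)] by simp
qed

definition above_xor_left :: "(nat \<times> nat) set \<Rightarrow> bool" where
  "above_xor_left T \<longleftrightarrow> (\<forall>(i, j) \<in> T. (i, j) \<noteq> (1, 1) \<longrightarrow>
     ((\<exists>i'<i. (i', j) \<in> T) \<noteq> (\<exists>j'<j. (i, j') \<in> T)))"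

lemma cnm_parent_eq_iff:
  assumes "above_xor_left T" and "(a, b) \<in> T" and "(a, b) \<noteq> (1, 1)"
  shows "cnm_parent T (a, b) = (i, j) \<longleftrightarrow> (i, j) \<in> T \<and>
     (b = j \<and> i < a \<and> (\<forall>x. x < a \<and> (x, j) \<in> T \<longrightarrow> x \<le> i) \<or>
      a = i \<and> j < b \<and> (\<forall>y. y < b \<and> (i, y) \<in> T \<longrightarrow> y \<le> j))"
proof (cases "\<exists>i'<a. (i', b) \<in> T")
  case True
  then have "\<not> (\<exists>j'<b. (a, j') \<in> T)"
    using assms unfolding above_xor_left_def by blast
  moreover have "finite {i'. i' < a \<and> (i', b) \<in> T}"
    by (rule finite_subset[of _ "{..<a}"]) auto
  ultimately show ?thesis
    using True by (auto simp: cnm_parent_def Max_eq_iff)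
next
  case False
  then have "\<exists>j'<b. (a, j') \<in> T"
    using assms unfolding above_xor_left_def by blast
  moreover have "finite {j'. j' < b \<and> (a, j') \<in> T}"
    by (rule finite_subset[of _ "{..<b}"]) auto
  ultimately show ?thesis
    using False by (auto simp: cnm_parent_def Max_eq_iff)
qed

lemma card_cnm_children:
  assumes "finite T" and "above_xor_left T" and "(i, j) \<in> T" and "0 < i" "0 < j"
  shows "card (cnm_children T (i, j)) = of_bool (\<exists>a>i. (a, j) \<in> T) + of_bool (\<exists>b>j. (i, b) \<in> T)"
proof -
  define C where "C = {a. (a, j) \<in> T}"
  define R where "R = {b. (i, b) \<in> T}"
  define below where "below = {a \<in> C. i < a \<and> (\<forall>x\<in>C. x < a \<longrightarrow> x \<le> i)}"
  define right where "right = {b \<in> R. j < b \<and> (\<forall>y\<in>R. y < b \<longrightarrow> y \<le> j)}"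
  have "finite C" "finite R"
    using \<open>finite T\<close> finite_Image[of "T\<inverse>" "{j}"] finite_Image[of T "{i}"]
    unfolding C_def R_def by (simp_all add: Image_singleton)
  have "cnm_children T (i, j) = (\<lambda>a. (a, j)) ` below \<union> (\<lambda>b. (i, b)) ` right"
    using cnm_parent_eq_iff[OF \<open>above_xor_left T\<close>] \<open>(i, j) \<in> T\<close> \<open>0 < i\<close> \<open>0 < j\<close>
    unfolding cnm_children_def below_def right_def C_def R_def by fastforce
  moreover have "card ((\<lambda>a. (a, j)) ` below) = of_bool (\<exists>a>i. (a, j) \<in> T)"
    using card_successor_set[OF \<open>finite C\<close>, of i]
    by (auto simp: card_image inj_on_def below_def C_def)
  moreover have "card ((\<lambda>b. (i, b)) ` right) = of_bool (\<exists>b>j. (i, b) \<in> T)"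
    using card_successor_set[OF \<open>finite R\<close>, of j]
    by (auto simp: card_image inj_on_def right_def R_def)
  moreover have "finite below" "finite right"
    using \<open>finite C\<close> \<open>finite R\<close> unfolding below_def right_def by simp_all
  moreover have "(\<lambda>a. (a, j)) ` below \<inter> (\<lambda>b. (i, b)) ` right = {}"
    unfolding below_def by auto
  ultimately show ?thesis
    by (simp add: card_Un_disjoint)
qed

lemma card_cnm_children_grid:
  assumes "T \<subseteq> {1..n} \<times> {1..n}" and "above_xor_left T" and "(i, j) \<in> T"
  shows "card (cnm_children T (i, j)) = of_bool (\<exists>a>i. (a, j) \<in> T) + of_bool (\<exists>b>j. (i, b) \<in> T)"
proof (rule card_cnm_children)
  show "finite T"
    using assms(1) by (rule finite_subset) simp
qed (use assms in auto)

text \<open>Conditions (1)-(4) on the support of a CNM, with (4) in the form given by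
  \<open>card_cnm_children\<close>.\<close>

definition cnm_support :: "nat \<Rightarrow> (nat \<times> nat) set \<Rightarrow> bool" where
  "cnm_support n T \<longleftrightarrow> T \<subseteq> {1..n} \<times> {1..n} \<and> (1, 1) \<in> T \<and> above_xor_left T \<and>
     (\<forall>i\<in>{1..n}. \<exists>j. (i, j) \<in> T) \<and> (\<forall>j\<in>{1..n}. \<exists>i. (i, j) \<in> T) \<and>
     (\<forall>(i, j) \<in> T. (\<exists>a>i. (a, j) \<in> T) \<longleftrightarrow> (\<exists>b>j. (i, b) \<in> T))"

definition cnm_leaves :: "(nat \<times> nat) set \<Rightarrow> (nat \<times> nat) set" where
  "cnm_leaves T = {(i, j) \<in> T. \<not> (\<exists>a>i. (a, j) \<in> T) \<and> \<not> (\<exists>b>j. (i, b) \<in> T)}"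

lemma is_cnm_iff: "is_cnm n M \<longleftrightarrow> (\<forall>i j. M i j \<in> {0, 1}) \<and> cnm_support n (support M)"
proof -
  have children: "(\<forall>p \<in> support M. card (cnm_children (support M) p) \<in> {0, 2}) \<longleftrightarrow>
      (\<forall>(i, j) \<in> support M. (\<exists>a>i. (a, j) \<in> support M) \<longleftrightarrow> (\<exists>b>j. (i, b) \<in> support M))"
    if "support M \<subseteq> {1..n} \<times> {1..n}" "above_xor_left (support M)"
  proof -
    have "card (cnm_children (support M) (i, j)) \<in> {0, 2} \<longleftrightarrow>
        ((\<exists>a>i. (a, j) \<in> support M) \<longleftrightarrow> (\<exists>b>j. (i, b) \<in> support M))"
      if "(i, j) \<in> support M" for i j
      using card_cnm_children_grid[OF \<open>support M \<subseteq> _\<close> \<open>above_xor_left _\<close> that] by auto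
    then show ?thesis
      unfolding Ball_def split_paired_All by simp
  qed
  have grid: "(\<forall>i j. M i j \<noteq> 0 \<longrightarrow> i \<in> {1..n} \<and> j \<in> {1..n}) \<longleftrightarrow> support M \<subseteq> {1..n} \<times> {1..n}"
    if "\<forall>i j. M i j \<in> {0, 1}"
  proof -
    have "M i j \<noteq> 0 \<longleftrightarrow> (i, j) \<in> support M" for i j
      using that[rule_format, of i j] by (auto simp: support_def)
    then show ?thesis
      by (auto simp: subset_iff)
  qed
  show ?thesis
  proof (cases "(\<forall>i j. M i j \<in> {0, 1}) \<and> support M \<subseteq> {1..n} \<times> {1..n} \<and> above_xor_left (support M)")
    case True
    then show ?thesis
      using grid children unfolding is_cnm_def cnm_support_def above_xor_left_def by simp
  next
    case False
    then show ?thesis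
      using grid unfolding is_cnm_def cnm_support_def above_xor_left_def by blast
  qed
qed

lemma leaf_matrix_eq_perm_matrix_iff:
  assumes "cnm_support n (support M)"
  shows "leaf_matrix M = perm_matrix n \<sigma> \<longleftrightarrow> cnm_leaves (support M) = (\<lambda>i. (i, \<sigma> i)) ` {1..n}"
proof -
  have "(i, j) \<in> support M \<and> cnm_children (support M) (i, j) = {} \<longleftrightarrow> (i, j) \<in> cnm_leaves (support M)"
    for i j
  proof -
    have "finite (cnm_children (support M) (i, j))"
      using assms unfolding cnm_support_def cnm_children_def
      by (metis (no_types, lifting) finite_SigmaI finite_atLeastAtMost finite_subset mem_Collect_eq subsetI)
    then show ?thesis
      using assms card_cnm_children_grid[of "support M" n i j]
      unfolding cnm_support_def cnm_leaves_def by auto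
  qed
  then have leaf: "leaf_matrix M = (\<lambda>i j. of_bool ((i, j) \<in> cnm_leaves (support M)))"
    by (simp add: leaf_matrix_def fun_eq_iff)
  have perm: "perm_matrix n \<sigma> = (\<lambda>i j. of_bool ((i, j) \<in> (\<lambda>i. (i, \<sigma> i)) ` {1..n}))"
    by (auto simp: perm_matrix_def fun_eq_iff)
  show ?thesis
    unfolding leaf perm by (simp add: fun_eq_iff set_eq_iff split_paired_All) blast
qed

definition perm_bounded :: "nat \<Rightarrow> (nat \<Rightarrow> nat) \<Rightarrow> (nat \<times> nat) set \<Rightarrow> bool" where
  "perm_bounded n \<sigma> T \<longleftrightarrow> T \<subseteq> {1..n} \<times> {1..n} \<and> (1, 1) \<in> T \<and> above_xor_left T \<and>
     (\<lambda>i. (i, \<sigma> i)) ` {1..n} \<subseteq> T \<and> (\<forall>(i, c) \<in> T. c \<le> \<sigma> i \<and> i \<le> inv \<sigma> c)"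

lemma finite_cnm_support: "cnm_support n T \<Longrightarrow> finite T"
  unfolding cnm_support_def by (meson finite_SigmaI finite_atLeastAtMost finite_subset)

lemma cnm_support_below_iff_right:
  assumes "cnm_support n T" and "(i, c) \<in> T"
  shows "(\<exists>a>i. (a, c) \<in> T) \<longleftrightarrow> (\<exists>b>c. (i, b) \<in> T)"
proof -
  have "\<forall>(i, c) \<in> T. (\<exists>a>i. (a, c) \<in> T) \<longleftrightarrow> (\<exists>b>c. (i, b) \<in> T)"
    using assms(1) unfolding cnm_support_def by blast
  from bspec[OF this assms(2)] show ?thesis
    by simp
qed

lemma row_last_in_cnm_leaves:
  assumes "cnm_support n T" and "(i, c) \<in> T"
  shows "(i, Max {b. (i, b) \<in> T}) \<in> cnm_leaves T" and "c \<le> Max {b. (i, b) \<in> T}"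
proof -
  define m where "m = Max {b. (i, b) \<in> T}"
  have fin: "finite {b. (i, b) \<in> T}"
    using finite_Image[OF finite_cnm_support[OF assms(1)], of "{i}"] by (simp add: Image_singleton)
  have "(i, m) \<in> T"
    using Max_in[OF fin] assms(2) unfolding m_def by auto
  moreover have "b \<le> m" if "(i, b) \<in> T" for b
    using Max_ge[OF fin] that unfolding m_def by simp
  ultimately show "(i, m) \<in> cnm_leaves T" and "c \<le> m"
    using assms cnm_support_below_iff_right leD unfolding cnm_leaves_def by blast+
qed

lemma column_last_in_cnm_leaves:
  assumes "cnm_support n T" and "(i, c) \<in> T"
  shows "(Max {a. (a, c) \<in> T}, c) \<in> cnm_leaves T" and "i \<le> Max {a. (a, c) \<in> T}"
proof -
  define m where "m = Max {a. (a, c) \<in> T}"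
  have fin: "finite {a. (a, c) \<in> T}"
    using finite_Image[of "T\<inverse>" "{c}"] finite_cnm_support[OF assms(1)] by (simp add: Image_singleton)
  have "(m, c) \<in> T"
    using Max_in[OF fin] assms(2) unfolding m_def by auto
  moreover have "a \<le> m" if "(a, c) \<in> T" for a
    using Max_ge[OF fin] that unfolding m_def by simp
  ultimately show "(m, c) \<in> cnm_leaves T" and "i \<le> m"
    using assms cnm_support_below_iff_right leD unfolding cnm_leaves_def by blast+
qed

lemma perm_bounded_if_cnm_leaves:
  assumes perm: "\<sigma> permutes {1..n}" and "cnm_support n T"
    and leaves: "cnm_leaves T = (\<lambda>i. (i, \<sigma> i)) ` {1..n}"
  shows "perm_bounded n \<sigma> T"
proof -
  have "c \<le> \<sigma> i" if "(i, c) \<in> T" for i c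
    using row_last_in_cnm_leaves[OF assms(2) that] leaves by auto
  moreover have "i \<le> inv \<sigma> c" if "(i, c) \<in> T" for i c
  proof -
    let ?m = "Max {a. (a, c) \<in> T}"
    have "c = \<sigma> ?m"
      using column_last_in_cnm_leaves(1)[OF assms(2) that] leaves by auto
    then have "inv \<sigma> c = ?m"
      by (metis permutes_inverses(2)[OF perm])
    then show ?thesis
      using column_last_in_cnm_leaves(2)[OF assms(2) that] by simp
  qed
  moreover have "(\<lambda>i. (i, \<sigma> i)) ` {1..n} \<subseteq> T"
    using leaves unfolding cnm_leaves_def by blast
  ultimately show ?thesis
    using assms(2) unfolding cnm_support_def perm_bounded_def by blast
qed

lemma perm_bounded_right_iff:
  assumes "perm_bounded n \<sigma> T" and "(i, c) \<in> T"
  shows "(\<exists>b>c. (i, b) \<in> T) \<longleftrightarrow> c \<noteq> \<sigma> i"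
proof
  assume "\<exists>b>c. (i, b) \<in> T"
  then show "c \<noteq> \<sigma> i"
    using assms(1) unfolding perm_bounded_def by fastforce
next
  assume "c \<noteq> \<sigma> i"
  moreover have "(i, \<sigma> i) \<in> T" and "c \<le> \<sigma> i"
    using assms unfolding perm_bounded_def by auto
  ultimately show "\<exists>b>c. (i, b) \<in> T"
    by (intro exI[of _ "\<sigma> i"]) simp
qed

lemma perm_bounded_below_iff:
  assumes perm: "\<sigma> permutes {1..n}" and "perm_bounded n \<sigma> T" and "(i, c) \<in> T"
  shows "(\<exists>a>i. (a, c) \<in> T) \<longleftrightarrow> c \<noteq> \<sigma> i"
proof -
  have graph: "\<And>i. i \<in> {1..n} \<Longrightarrow> (i, \<sigma> i) \<in> T"
    and bounds: "\<And>i c. (i, c) \<in> T \<Longrightarrow> c \<le> \<sigma> i \<and> i \<le> inv \<sigma> c"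
    and "c \<in> {1..n}"
    using assms(2,3) unfolding perm_bounded_def by auto
  then have "inv \<sigma> c \<in> {1..n}" and c: "\<sigma> (inv \<sigma> c) = c"
    using permutes_in_image[OF permutes_inv[OF perm]] permutes_inverses(1)[OF perm] by auto
  show ?thesis
  proof
    assume "\<exists>a>i. (a, c) \<in> T"
    then show "c \<noteq> \<sigma> i"
      using bounds permutes_inverses(2)[OF perm] by fastforce
  next
    assume "c \<noteq> \<sigma> i"
    have "(inv \<sigma> c, c) \<in> T"
      using graph \<open>inv \<sigma> c \<in> {1..n}\<close> c by metis
    moreover have "i < inv \<sigma> c"
      using bounds[OF assms(3)] c \<open>c \<noteq> \<sigma> i\<close> by (metis le_neq_implies_less)
    ultimately show "\<exists>a>i. (a, c) \<in> T"
      by blast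
  qed
qed

lemma cnm_support_if_perm_bounded:
  assumes perm: "\<sigma> permutes {1..n}" and T: "perm_bounded n \<sigma> T"
  shows "cnm_support n T" and "cnm_leaves T = (\<lambda>i. (i, \<sigma> i)) ` {1..n}"
proof -
  have grid: "T \<subseteq> {1..n} \<times> {1..n}" and graph: "\<And>i. i \<in> {1..n} \<Longrightarrow> (i, \<sigma> i) \<in> T"
    using T unfolding perm_bounded_def by auto
  note right_iff = perm_bounded_right_iff[OF T] and below_iff = perm_bounded_below_iff[OF perm T]
  have "\<forall>j\<in>{1..n}. \<exists>i. (i, j) \<in> T"
    using graph permutes_image[OF perm] by (metis imageE)
  moreover have "\<forall>(i, c) \<in> T. (\<exists>a>i. (a, c) \<in> T) \<longleftrightarrow> (\<exists>b>c. (i, b) \<in> T)"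
    unfolding Ball_def split_paired_All using right_iff below_iff by simp
  ultimately show "cnm_support n T"
    using T graph unfolding perm_bounded_def cnm_support_def by blast
  have "(i, c) \<in> cnm_leaves T \<longleftrightarrow> (i, c) \<in> T \<and> c = \<sigma> i" for i c
    unfolding cnm_leaves_def using right_iff[of i c] below_iff[of i c] by blast
  then show "cnm_leaves T = (\<lambda>i. (i, \<sigma> i)) ` {1..n}"
    unfolding set_eq_iff split_paired_All using graph grid by auto
qed

lemma ex_cnm_iff_ex_perm_bounded:
  assumes perm: "\<sigma> permutes {1..n}"
  shows "(\<exists>M. is_cnm n M \<and> leaf_matrix M = perm_matrix n \<sigma>) \<longleftrightarrow> (\<exists>T. perm_bounded n \<sigma> T)"
proof
  assume "\<exists>M. is_cnm n M \<and> leaf_matrix M = perm_matrix n \<sigma>"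
  then obtain M where "cnm_support n (support M)"
    and "cnm_leaves (support M) = (\<lambda>i. (i, \<sigma> i)) ` {1..n}"
    using is_cnm_iff leaf_matrix_eq_perm_matrix_iff by blast
  then show "\<exists>T. perm_bounded n \<sigma> T"
    using perm_bounded_if_cnm_leaves[OF perm] by blast
next
  assume "\<exists>T. perm_bounded n \<sigma> T"
  then obtain T where T: "perm_bounded n \<sigma> T"
    by blast
  define M :: "nat \<Rightarrow> nat \<Rightarrow> nat" where "M = (\<lambda>i j. of_bool ((i, j) \<in> T))"
  have "support M = T"
    by (simp add: support_def M_def)
  then have "is_cnm n M" and "leaf_matrix M = perm_matrix n \<sigma>"
    using cnm_support_if_perm_bounded[OF perm T] is_cnm_iff leaf_matrix_eq_perm_matrix_iff
    by (auto simp: M_def)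
  then show "\<exists>M. is_cnm n M \<and> leaf_matrix M = perm_matrix n \<sigma>"
    by blast
qed

lemma irreducible_if_perm_bounded:
  assumes perm: "\<sigma> permutes {1..n}" and "perm_bounded n \<sigma> T"
  shows "irreducible_perm n \<sigma>"
  unfolding irreducible_perm_def
proof
  assume "\<exists>j. 1 \<le> j \<and> j < n \<and> \<sigma> ` {1..j} = {1..j}"
  then obtain j where j: "1 \<le> j" "j < n" and fixed: "\<sigma> ` {1..j} = {1..j}"
    by blast
  have grid: "T \<subseteq> {1..n} \<times> {1..n}" and "above_xor_left T"
    and graph: "\<And>i. i \<in> {1..n} \<Longrightarrow> (i, \<sigma> i) \<in> T"
    and bounds: "\<And>i c. (i, c) \<in> T \<Longrightarrow> c \<le> \<sigma> i \<and> i \<le> inv \<sigma> c"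
    using assms(2) unfolding perm_bounded_def by auto
  have "(Suc j, \<sigma> (Suc j)) \<in> T"
    using graph j by simp
  then obtain c where c: "(Suc j, c) \<in> T" and "\<forall>c'<c. (Suc j, c') \<notin> T"
    using exists_least_iff[of "\<lambda>c. (Suc j, c) \<in> T"] by blast
  then have "\<exists>a<Suc j. (a, c) \<in> T"
    using \<open>above_xor_left T\<close> j unfolding above_xor_left_def by fastforce
  then obtain a where "a \<in> {1..j}" "(a, c) \<in> T"
    using grid by fastforce
  then have "c \<le> \<sigma> a" and "\<sigma> a \<in> {1..j}"
    using bounds fixed by (blast, blast)
  moreover have "1 \<le> c"
    using grid c by auto
  ultimately have "c \<in> {1..j}"
    by simp
  then have "inv \<sigma> c \<le> j"
    using fixed permutes_inverses(2)[OF perm] by (metis atLeastAtMost_iff imageE)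
  then show False
    using bounds[OF c] by simp
qed

text \<open>
  Row i of the constructed support consists of the columns that \<sigma> reaches for the first time in
  row i, i.e.\ those in the interval from the maximum of \<sigma> on {1..<i} (exclusive) to \<sigma> i, and,
  for i \<ge> 2, of the vertex \<open>row_start \<sigma> i\<close> whose parent lies above it: the rightmost column
  not beyond \<sigma> i or that maximum which is not yet taken by a leaf of an earlier row.
  Irreducibility of \<sigma> guarantees that such a column exists.
\<close>

definition new_columns :: "(nat \<Rightarrow> nat) \<Rightarrow> nat \<Rightarrow> nat set" where
  "new_columns \<sigma> i = {c. 1 \<le> c \<and> c \<le> \<sigma> i \<and> (\<forall>k\<in>{1..<i}. \<sigma> k < c)}"

definition free_columns :: "(nat \<Rightarrow> nat) \<Rightarrow> nat \<Rightarrow> nat set" where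
  "free_columns \<sigma> i = {c. 1 \<le> c \<and> c \<le> \<sigma> i \<and> (\<exists>k\<in>{1..<i}. c \<le> \<sigma> k) \<and> c \<notin> \<sigma> ` {1..<i}}"

definition row_start :: "(nat \<Rightarrow> nat) \<Rightarrow> nat \<Rightarrow> nat" where
  "row_start \<sigma> i = Max (free_columns \<sigma> i)"

definition perm_tree :: "nat \<Rightarrow> (nat \<Rightarrow> nat) \<Rightarrow> (nat \<times> nat) set" where
  "perm_tree n \<sigma> = {(i, c). i \<in> {1..n} \<and> c \<in> new_columns \<sigma> i} \<union> {(i, row_start \<sigma> i) | i. i \<in> {2..n}}"

lemma finite_free_columns: "finite (free_columns \<sigma> i)"
  by (rule finite_subset[of _ "{..\<sigma> i}"]) (auto simp: free_columns_def)

lemma le_row_start: "c \<in> free_columns \<sigma> i \<Longrightarrow> c \<le> row_start \<sigma> i"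
  unfolding row_start_def using Max_ge[OF finite_free_columns] .

lemma mem_perm_tree:
  "(i, c) \<in> perm_tree n \<sigma> \<longleftrightarrow>
     i \<in> {1..n} \<and> c \<in> new_columns \<sigma> i \<or> i \<in> {2..n} \<and> c = row_start \<sigma> i"
  unfolding perm_tree_def by auto

context
  fixes n :: nat and \<sigma> :: "nat \<Rightarrow> nat"
  assumes perm: "\<sigma> permutes {1..n}" and irreducible: "irreducible_perm n \<sigma>"
begin

lemma free_columns_nonempty:
  assumes i: "i \<in> {2..n}"
  shows "free_columns \<sigma> i \<noteq> {}"
proof -
  define j where "j = i - 1"
  have j: "1 \<le> j" "j < n" and prefix: "{1..<i} = {1..j}"
    using i unfolding j_def by auto
  have moved: "\<sigma> ` {1..j} \<noteq> {1..j}"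
    using irreducible j unfolding irreducible_perm_def by blast
  have inj: "inj_on \<sigma> {1..n}"
    using perm permutes_inj_on by blast
  then have card: "card (\<sigma> ` {1..j}) = card {1..j}"
    using j by (intro card_image inj_on_subset[OF inj]) auto
  obtain k where k: "k \<in> {1..j}" "\<sigma> k \<notin> {1..j}"
    using card_subset_eq[OF _ _ card] moved by blast
  obtain c where c: "c \<in> {1..j}" "c \<notin> \<sigma> ` {1..j}"
    using card_subset_eq[OF _ _ card[symmetric]] moved by blast
  have "k \<in> {1..n}" "i \<in> {1..n}"
    using k j i by simp_all
  then have "\<sigma> k \<in> {1..n}" "\<sigma> i \<in> {1..n}"
    using permutes_in_image[OF perm] by blast+
  then have "c \<le> \<sigma> k"
    using k c by auto
  have "\<sigma> i \<notin> \<sigma> ` {1..j}"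
    using permutes_notin_image_prefix[OF perm \<open>i \<in> {1..n}\<close>] prefix by simp
  then have "min c (\<sigma> i) \<notin> \<sigma> ` {1..<i}"
    using c(2) prefix by (cases "c \<le> \<sigma> i") (simp_all add: min_def)
  moreover have "\<exists>k\<in>{1..<i}. min c (\<sigma> i) \<le> \<sigma> k"
    using k prefix \<open>c \<le> \<sigma> k\<close> min.coboundedI1 by blast
  moreover have "1 \<le> min c (\<sigma> i)"
    using c \<open>\<sigma> i \<in> {1..n}\<close> by simp
  ultimately have "min c (\<sigma> i) \<in> free_columns \<sigma> i"
    unfolding free_columns_def by simp
  then show ?thesis
    by blast
qed

lemma row_start_in_free_columns:
  assumes "i \<in> {2..n}"
  shows "row_start \<sigma> i \<in> free_columns \<sigma> i"
  unfolding row_start_def using Max_in[OF finite_free_columns free_columns_nonempty[OF assms]] .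

lemma perm_tree_vertexD:
  assumes "(i, c) \<in> perm_tree n \<sigma>"
  shows "i \<in> {1..n}" and "1 \<le> c" and "c \<le> \<sigma> i" and "c \<notin> \<sigma> ` {1..<i}"
proof -
  consider "i \<in> {1..n}" "c \<in> new_columns \<sigma> i" | "i \<in> {2..n}" "c \<in> free_columns \<sigma> i"
    using assms row_start_in_free_columns unfolding mem_perm_tree by auto
  then have "i \<in> {1..n} \<and> 1 \<le> c \<and> c \<le> \<sigma> i \<and> c \<notin> \<sigma> ` {1..<i}"
    by cases (auto simp: new_columns_def free_columns_def)
  then show "i \<in> {1..n}" and "1 \<le> c" and "c \<le> \<sigma> i" and "c \<notin> \<sigma> ` {1..<i}"
    by simp_all
qed

lemma perm_tree_exists_leaf_above_right:
  assumes "(a, y) \<in> perm_tree n \<sigma>"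
  shows "\<exists>k\<in>{1..a}. y \<le> \<sigma> k"
proof -
  consider "a \<in> {1..n}" "y \<le> \<sigma> a" | "y \<in> free_columns \<sigma> a"
    using assms row_start_in_free_columns
    unfolding mem_perm_tree new_columns_def by auto
  then show ?thesis
    by cases (force simp: free_columns_def)+
qed

lemma one_one_in_perm_tree: "n \<ge> 1 \<Longrightarrow> (1, 1) \<in> perm_tree n \<sigma>"
  using permutes_in_image[OF perm, of 1] unfolding mem_perm_tree new_columns_def by simp

lemma perm_tree_new_column_hangs_left:
  assumes "x \<in> {1..n}" and "y \<in> new_columns \<sigma> x" and "(x, y) \<noteq> (1, 1)"
  shows "\<not> (\<exists>a<x. (a, y) \<in> perm_tree n \<sigma>)" and "\<exists>b<y. (x, b) \<in> perm_tree n \<sigma>"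
proof -
  have before: "\<sigma> k < y" if "k \<in> {1..<x}" for k
    using assms(2) that unfolding new_columns_def by blast
  show "\<not> (\<exists>a<x. (a, y) \<in> perm_tree n \<sigma>)"
  proof
    assume "\<exists>a<x. (a, y) \<in> perm_tree n \<sigma>"
    then obtain a k where "a < x" "k \<in> {1..a}" "y \<le> \<sigma> k"
      using perm_tree_exists_leaf_above_right by blast
    then show False
      using before[of k] by simp
  qed
  show "\<exists>b<y. (x, b) \<in> perm_tree n \<sigma>"
  proof (cases "x = 1")
    case True
    then show ?thesis
      using assms one_one_in_perm_tree unfolding new_columns_def
      by (intro exI[of _ 1]) auto
  next
    case False
    then have "x \<in> {2..n}"
      using assms(1) by simp
    then have "row_start \<sigma> x \<in> free_columns \<sigma> x" and "(x, row_start \<sigma> x) \<in> perm_tree n \<sigma>"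
      using row_start_in_free_columns unfolding mem_perm_tree by simp_all
    then obtain k where "k \<in> {1..<x}" "row_start \<sigma> x \<le> \<sigma> k"
      unfolding free_columns_def by blast
    then show ?thesis
      using before \<open>(x, row_start \<sigma> x) \<in> perm_tree n \<sigma>\<close> by (meson le_less_trans)
  qed
qed

lemma perm_tree_row_start_hangs_above:
  assumes "x \<in> {2..n}"
  shows "\<exists>a<x. (a, row_start \<sigma> x) \<in> perm_tree n \<sigma>"
    and "\<not> (\<exists>b<row_start \<sigma> x. (x, b) \<in> perm_tree n \<sigma>)"
proof -
  let ?y = "row_start \<sigma> x"
  obtain k where k: "k \<in> {1..<x}" "?y \<le> \<sigma> k" and "1 \<le> ?y"
    using row_start_in_free_columns[OF assms] unfolding free_columns_def by blast
  \<comment> \<open>the first row reaching column ?y holds it as a new column\<close>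
  then obtain t where t: "1 \<le> t" "?y \<le> \<sigma> t" and first: "\<forall>t'<t. \<not> (1 \<le> t' \<and> ?y \<le> \<sigma> t')"
    using exists_least_iff[of "\<lambda>t. 1 \<le> t \<and> ?y \<le> \<sigma> t"] by (metis atLeastLessThan_iff)
  have "t \<le> k"
    using first k by (meson atLeastLessThan_iff not_le)
  have "?y \<in> new_columns \<sigma> t"
    using t first \<open>1 \<le> ?y\<close> unfolding new_columns_def by (auto simp: not_le)
  moreover have "t \<in> {1..n}"
    using t \<open>t \<le> k\<close> k assms by simp
  ultimately show "\<exists>a<x. (a, ?y) \<in> perm_tree n \<sigma>"
    using \<open>t \<le> k\<close> k unfolding mem_perm_tree by (intro exI[of _ t]) auto
  show "\<not> (\<exists>b<?y. (x, b) \<in> perm_tree n \<sigma>)"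
  proof
    assume "\<exists>b<?y. (x, b) \<in> perm_tree n \<sigma>"
    then obtain b where "b < ?y" "b \<in> new_columns \<sigma> x"
      using assms unfolding mem_perm_tree by auto
    then show False
      using k unfolding new_columns_def by fastforce
  qed
qed

lemma above_xor_left_perm_tree: "above_xor_left (perm_tree n \<sigma>)"
proof -
  have "(\<exists>a<x. (a, y) \<in> perm_tree n \<sigma>) \<noteq> (\<exists>b<y. (x, b) \<in> perm_tree n \<sigma>)"
    if xy: "(x, y) \<in> perm_tree n \<sigma>" and not_root: "(x, y) \<noteq> (1, 1)" for x y
  proof -
    consider (new) "x \<in> {1..n}" "y \<in> new_columns \<sigma> x" | (start) "x \<in> {2..n}" "y = row_start \<sigma> x"
      using xy unfolding mem_perm_tree by blast
    then show ?thesis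
    proof cases
      case new
      then show ?thesis
        using perm_tree_new_column_hangs_left[OF new not_root] by blast
    next
      case start
      then show ?thesis
        using perm_tree_row_start_hangs_above[OF start(1)] by simp
    qed
  qed
  then show ?thesis
    unfolding above_xor_left_def by blast
qed

lemma graph_subset_perm_tree: "(\<lambda>i. (i, \<sigma> i)) ` {1..n} \<subseteq> perm_tree n \<sigma>"
proof clarify
  fix i
  assume i: "i \<in> {1..n}"
  then have "\<sigma> i \<in> {1..n}"
    using permutes_in_image[OF perm] by blast
  show "(i, \<sigma> i) \<in> perm_tree n \<sigma>"
  proof (cases "\<forall>k\<in>{1..<i}. \<sigma> k < \<sigma> i")
    case True
    then show ?thesis
      using i \<open>\<sigma> i \<in> {1..n}\<close> unfolding mem_perm_tree new_columns_def by simp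
  next
    case False
    then obtain k where k: "k \<in> {1..<i}" "\<sigma> i \<le> \<sigma> k"
      by (auto simp: not_less)
    then have "i \<in> {2..n}"
      using i by simp
    have "\<sigma> i \<in> free_columns \<sigma> i"
      using k \<open>\<sigma> i \<in> {1..n}\<close> permutes_notin_image_prefix[OF perm i]
      unfolding free_columns_def by auto
    then have "\<sigma> i = row_start \<sigma> i"
      using le_row_start row_start_in_free_columns[OF \<open>i \<in> {2..n}\<close>]
      unfolding free_columns_def by (simp add: antisym)
    then show ?thesis
      using \<open>i \<in> {2..n}\<close> unfolding mem_perm_tree by simp
  qed
qed

lemma perm_bounded_perm_tree:
  assumes "n \<ge> 1"
  shows "perm_bounded n \<sigma> (perm_tree n \<sigma>)"
proof -
  have bounds: "i \<in> {1..n} \<and> c \<in> {1..n} \<and> c \<le> \<sigma> i \<and> i \<le> inv \<sigma> c"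
    if "(i, c) \<in> perm_tree n \<sigma>" for i c
  proof -
    note vertex = perm_tree_vertexD[OF that]
    have "\<sigma> i \<in> {1..n}"
      using vertex(1) permutes_in_image[OF perm] by blast
    then have "c \<in> {1..n}"
      using vertex(2,3) by simp
    then have "inv \<sigma> c \<in> {1..n}" and "\<sigma> (inv \<sigma> c) = c"
      using permutes_in_image[OF permutes_inv[OF perm]] permutes_inverses(1)[OF perm] by auto
    then have "i \<le> inv \<sigma> c"
      using vertex(4) by (metis atLeastAtMost_iff atLeastLessThan_iff image_eqI not_le)
    then show ?thesis
      using vertex \<open>c \<in> {1..n}\<close> by simp
  qed
  then have "perm_tree n \<sigma> \<subseteq> {1..n} \<times> {1..n}"
    and "\<forall>(i, c) \<in> perm_tree n \<sigma>. c \<le> \<sigma> i \<and> i \<le> inv \<sigma> c"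
    by auto
  then show ?thesis
    using one_one_in_perm_tree[OF assms] above_xor_left_perm_tree graph_subset_perm_tree
    unfolding perm_bounded_def by blast
qed

end

theorem theorem3p1:
  fixes n :: nat and \<sigma> :: "nat \<Rightarrow> nat"
  assumes "n \<ge> 1" and "\<sigma> permutes {1..n}"
  shows "(\<exists>M. is_cnm n M \<and> leaf_matrix M = perm_matrix n \<sigma>) \<longleftrightarrow> irreducible_perm n \<sigma>"
proof -
  have "(\<exists>M. is_cnm n M \<and> leaf_matrix M = perm_matrix n \<sigma>) \<longleftrightarrow> (\<exists>T. perm_bounded n \<sigma> T)"
    using assms(2) by (rule ex_cnm_iff_ex_perm_bounded)
  also have "\<dots> \<longleftrightarrow> irreducible_perm n \<sigma>"
    using irreducible_if_perm_bounded[OF assms(2)] perm_bounded_perm_tree[OF assms(2) _ assms(1)]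
    by blast
  finally show ?thesis .
qed

end
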